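(* Let $\varrho>0$ and $k$ a positive integer, and let \[\gamma(k,\varrho)=\frac{1}{\Gamma(1+\varrho^2)^{k^2}}\int_{\mathcal{P}_{k,\varrho}}\prod_{i=1}^k\Big(1-\sum_{j=1}^kx_{ij}^{1/\varrho^2}\Big)\prod_{j=1}^k\Big(1-\sum_{i=1}^kx_{ij}^{1/\varrho^2}\Big)d\underline{x},\] where $\mathcal{P}_{k,\varrho}=\{(x_{ij})\in\mathbb{R}^{k^2}: x_{ij}\ge0,\ \sum_{i}x_{ij}^{1/\varrho^2}\le1\ \forall j,\ \sum_jx_{ij}^{1/\varrho^2}\le1\ \forall i\}$. Then \[\Gamma(1+\varrho^2)^{-k^2}\,2^{-2k-k^2\varrho^2}\,k^{-k^2\varrho^2}\le\gamma(k,\varrho)\le\Gamma(1+k\varrho^2)^{-k}.\] In particular, if $\varrho$ is bounded and $k\to\infty$, then $\log\gamma(k,\varrho)=-k^2\varrho^2\log k+O(k^2)$.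
   Context: $d\underline{x}$ is Lebesgue measure on $\mathbb{R}^{k^2}$. *)

theory Defs
  imports "HOL-Analysis.Analysis"
begin

text \<open>Points of R^(k^2) are functions on the index set {0..<k} x {0..<k}
  (extensional outside it); Lebesgue measure is the k^2-fold product of lborel.\<close>

definition mat_space :: "nat \<Rightarrow> (nat \<times> nat \<Rightarrow> real) measure" where
  "mat_space k = PiM ({..<k} \<times> {..<k}) (\<lambda>_. lborel)"

definition P_set :: "nat \<Rightarrow> real \<Rightarrow> (nat \<times> nat \<Rightarrow> real) set" where
  "P_set k \<rho> = {x \<in> ({..<k} \<times> {..<k}) \<rightarrow>\<^sub>E UNIV.
      (\<forall>i<k. \<forall>j<k. x (i, j) \<ge> 0) \<and>
      (\<forall>j<k. (\<Sum>i<k. x (i, j) powr (1 / \<rho>\<^sup>2)) \<le> 1) \<and>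
      (\<forall>i<k. (\<Sum>j<k. x (i, j) powr (1 / \<rho>\<^sup>2)) \<le> 1)}"

definition gamma_kr :: "nat \<Rightarrow> real \<Rightarrow> real" where
  "gamma_kr k \<rho> = inverse (Gamma (1 + \<rho>\<^sup>2) ^ (k\<^sup>2)) *
     (LINT x : P_set k \<rho> | mat_space k.
        (\<Prod>i<k. 1 - (\<Sum>j<k. x (i, j) powr (1 / \<rho>\<^sup>2))) *
        (\<Prod>j<k. 1 - (\<Sum>i<k. x (i, j) powr (1 / \<rho>\<^sup>2))))"

end

theory Submission
  imports Defs
begin

text \<open>
  Upper bound: on P_set drop the column factors and bound every row factor by the tangent line
  estimate 1 - s \<le> e^(l-1)/l * e^(-l s). The bound is a product over the k^2 entries, so the
  integral factors into k^2 copies of \<integral>_0^\<infinity> exp (-l y^(1/\<rho>^2)) dy = l^(-\<rho>^2) \<Gamma>(1 + \<rho>^2).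
  The minimising choice l = 1 + k\<rho>^2 together with \<Gamma>(1 + t) \<le> (1 + t)^(1+t) e^(-t) gives
  \<Gamma>(1 + k\<rho>^2)^(-k).
  Lower bound: on the cube [0, (2k)^(-\<rho>^2)]^(k\<times>k) every row and column sum is at most 1/2, so
  the cube lies in P_set and the integrand is at least 4^(-k) on it.
  The asymptotics follow by taking logarithms and using t^t e^(-t) \<le> \<Gamma>(1 + t) \<le> (1 + t)^(1+t) e^(-t).
\<close>

lemma has_integral_greaterThan_iff_atLeast:
  fixes f :: "real \<Rightarrow> 'a::banach"
  shows "(f has_integral I) {a<..} \<longleftrightarrow> (f has_integral I) {a..}"
  using has_integral_interior[of "{a..}" f I] by simp

lemma Gamma_1_plus_le:
  assumes t: "t \<ge> (0::real)"
  shows "Gamma (1 + t) \<le> (t + 1) powr (t + 1) * exp (- t)"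
proof -
  define c where "c = (t + 1) powr t * exp (- t)"
  have G: "((\<lambda>u. u powr t / exp u) has_integral Gamma (1 + t)) {0..}"
    using Gamma_integral_real[of "1 + t"] t by simp
  have E: "((\<lambda>u. c * exp (- (1 / (t + 1)) * u)) has_integral c * (t + 1)) {0..}"
    using has_integral_mult_right[OF has_integral_exp_minus_to_infinity[of "1 / (t + 1)" 0]] t
    by simp
  have "u powr t / exp u \<le> c * exp (- (1 / (t + 1)) * u)" if u: "u \<ge> 0" for u
  proof (cases "u = 0")
    case False
    have "t * ln (u / (t + 1)) \<le> t * (u / (t + 1) - 1)"
      using u t False by (intro mult_left_mono ln_le_minus_one) auto
    then have "t * ln u - u \<le> t * ln (t + 1) - t - u / (t + 1)"
      using u t False by (simp add: ln_div field_simps)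
    then show ?thesis
      using u t False by (simp add: c_def powr_def exp_diff exp_minus field_simps flip: exp_add)
  qed (use t in \<open>simp add: c_def\<close>)
  then have "Gamma (1 + t) \<le> c * (t + 1)"
    using has_integral_le[OF G E] by auto
  then show ?thesis
    using t by (simp add: c_def powr_add mult_ac)
qed

lemma Gamma_1_plus_ge:
  assumes t: "t \<ge> (0::real)"
  shows "t powr t * exp (- t) \<le> Gamma (1 + t)"
proof -
  have G: "((\<lambda>u. u powr t / exp u) has_integral Gamma (1 + t)) {0..}"
    using Gamma_integral_real[of "1 + t"] t by simp
  have "((\<lambda>u. t powr t * exp (- 1 * u)) has_integral t powr t * exp (- t)) {t..}"
    using has_integral_mult_right[OF has_integral_exp_minus_to_infinity[of 1 t]] by simp
  then have E: "((\<lambda>u. if u \<in> {t..} then t powr t * exp (- 1 * u) else 0) has_integral t powr t * exp (- t)) {0..}"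
    using t by (subst has_integral_restrict) auto
  show ?thesis
    by (rule has_integral_le[OF E G])
      (use t in \<open>auto simp: exp_minus divide_inverse intro!: mult_right_mono powr_mono2\<close>)
qed

lemma ln_Gamma_1_plus_le_square:
  assumes s: "s \<ge> (0::real)"
  shows "ln (Gamma (1 + s)) \<le> s\<^sup>2"
proof -
  have "ln (Gamma (1 + s)) \<le> ln ((s + 1) powr (s + 1) * exp (- s))"
    using Gamma_1_plus_le[OF s] s by (simp add: add_pos_nonneg)
  also have "\<dots> = (s + 1) * ln (s + 1) - s"
    using s by (simp add: ln_mult)
  also have "\<dots> \<le> (s + 1) * s - s"
    using ln_add_one_self_le_self[OF s] s by (simp add: mult_left_mono add.commute)
  also have "\<dots> = s\<^sup>2"
    by (simp add: power2_eq_square algebra_simps)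
  finally show ?thesis .
qed

lemma ln_Gamma_1_plus_ge:
  assumes t: "t > (0::real)"
  shows "t * ln t - t \<le> ln (Gamma (1 + t))"
proof -
  have "ln (t powr t * exp (- t)) \<le> ln (Gamma (1 + t))"
    using Gamma_1_plus_ge[of t] t by simp
  then show ?thesis
    using t by (simp add: ln_mult)
qed

lemma has_integral_exp_neg_mult_root:
  fixes l r :: real
  assumes l: "l > 0" and r: "r > 0"
  shows "((\<lambda>y. exp (- l * y powr (1 / r))) has_integral l powr (- r) * Gamma (1 + r)) {0..}"
proof -
  define g where "g u = (u / l) powr r" for u
  define g' where "g' u = r / l * (u / l) powr (r - 1)" for u
  have der: "(g has_field_derivative g' u) (at u within {0<..})" if "u \<in> {0<..}" for u
  proof -
    have "(g has_field_derivative r * (u / l) powr (r - 1) * (1 / l)) (at u)"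
      using that l unfolding g_def by (auto intro!: derivative_eq_intros)
    then show ?thesis unfolding g'_def by (auto intro: has_field_derivative_at_within simp: field_simps)
  qed
  have g_root: "g u powr (1 / r) = u / l" if "u > 0" for u
    using that l r by (simp add: g_def powr_powr)
  have inj: "inj_on g {0<..}"
  proof (rule inj_onI)
    fix a b :: real assume "a \<in> {0<..}" "b \<in> {0<..}" "g a = g b"
    then have "a / l = b / l" using g_root by (metis greaterThan_iff)
    then show "a = b" using l by simp
  qed
  have img: "g ` {0<..} = {0<..}"
  proof (intro equalityI subsetI)
    fix y :: real assume y: "y \<in> {0<..}"
    have "g (l * y powr (1 / r)) = y" using y l r by (simp add: g_def powr_powr)
    moreover have "l * y powr (1 / r) \<in> {0<..}" using y l by simp
    ultimately show "y \<in> g ` {0<..}" by (metis image_eqI)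
  qed (use l in \<open>auto simp: g_def\<close>)
  have "((\<lambda>u. (r * l powr (- r)) * (u powr (r - 1) / exp u)) has_integral (r * l powr (- r)) * Gamma r) {0<..}"
    using Gamma_integral_real[OF r] by (intro has_integral_mult_right) (simp add: has_integral_greaterThan_iff_atLeast)
  moreover have "(r * l powr (- r)) * (u powr (r - 1) / exp u) = \<bar>g' u\<bar> * exp (- l * g u powr (1 / r))"
    if "u \<in> {0<..}" for u
    using that l r by (simp add: g_root g'_def abs_mult powr_divide powr_diff powr_minus field_simps exp_minus)
  ultimately have subst:
    "((\<lambda>u. \<bar>g' u\<bar> * exp (- l * g u powr (1 / r))) has_integral (r * l powr (- r)) * Gamma r) {0<..}"
    by (rule has_integral_eq[rotated])
  have "(\<lambda>u. \<bar>g' u\<bar> * exp (- l * g u powr (1 / r))) absolutely_integrable_on {0<..}"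
    using subst by (intro nonnegative_absolutely_integrable_1) auto
  then have "(\<lambda>y. exp (- l * y powr (1 / r))) absolutely_integrable_on g ` {0<..} \<and>
      integral (g ` {0<..}) (\<lambda>y. exp (- l * y powr (1 / r))) = (r * l powr (- r)) * Gamma r"
    using has_absolute_integral_change_of_variables_1'[OF _ der inj] subst by (auto simp: integral_unique)
  then have "((\<lambda>y. exp (- l * y powr (1 / r))) has_integral (r * l powr (- r)) * Gamma r) {0<..}"
    using img by (metis absolutely_integrable_on_def has_integral_integral)
  moreover have "(r * l powr (- r)) * Gamma r = l powr (- r) * Gamma (1 + r)"
    using Gamma_plus1[of r] r nonpos_Ints_nonpos[of r] by (force simp: add.commute)
  ultimately show ?thesis
    by (simp add: has_integral_greaterThan_iff_atLeast)
qed

lemma one_minus_le_exp_mult: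
  fixes l s :: real
  assumes "l > 0"
  shows "1 - s \<le> exp (l - 1) / l * exp (- l * s)"
proof -
  have "l * (1 - s) \<le> exp (l * (1 - s) - 1)"
    using exp_ge_add_one_self[of "l * (1 - s) - 1"] by simp
  also have "\<dots> = exp (l - 1) * exp (- l * s)"
    by (simp add: exp_add[symmetric] algebra_simps)
  finally show ?thesis
    using assms by (simp add: field_simps)
qed

lemma mult_one_minus_ln_le_one:
  assumes s: "s > (0::real)"
  shows "s * (1 - ln s) \<le> 1"
proof -
  have "- ln s \<le> 1 / s - 1"
    using ln_le_minus_one[of "1 / s"] s by (simp add: ln_div)
  then have "s * (- ln s) \<le> s * (1 / s - 1)"
    using s by (intro mult_left_mono) auto
  then show ?thesis
    using s by (simp add: algebra_simps)
qed

lemma space_mat_space: "space (mat_space k) = ({..<k} \<times> {..<k}) \<rightarrow>\<^sub>E UNIV"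
  by (simp add: mat_space_def space_PiM)

lemma measurable_mat_space_entry: "(\<lambda>x. x p) \<in> borel_measurable (mat_space k)"
proof (cases "p \<in> {..<k} \<times> {..<k}")
  case True
  then show ?thesis
    unfolding mat_space_def by measurable
next
  case False
  then have "(\<lambda>x. x p) \<in> borel_measurable (mat_space k) \<longleftrightarrow> (\<lambda>x. undefined::real) \<in> borel_measurable (mat_space k)"
    by (intro measurable_cong) (rule PiE_arb, auto simp: space_mat_space)
  then show ?thesis by simp
qed

lemma P_set_sets: "P_set k \<rho> \<in> sets (mat_space k)"
proof -
  have "P_set k \<rho> = {x \<in> space (mat_space k).
      (\<forall>p\<in>{..<k} \<times> {..<k}. 0 \<le> x p) \<and>
      (\<forall>j\<in>{..<k}. (\<Sum>i<k. x (i, j) powr (1 / \<rho>\<^sup>2)) \<le> 1) \<and>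
      (\<forall>i\<in>{..<k}. (\<Sum>j<k. x (i, j) powr (1 / \<rho>\<^sup>2)) \<le> 1)}"
    by (auto simp: P_set_def space_mat_space)
  also have "\<dots> \<in> sets (mat_space k)"
    by (intro sets.sets_Collect_conj sets.sets_Collect_countable_Ball borel_measurable_le
        borel_measurable_const borel_measurable_sum powr_real_measurable measurable_mat_space_entry)
  finally show ?thesis .
qed

definition slack_prod :: "nat \<Rightarrow> real \<Rightarrow> (nat \<times> nat \<Rightarrow> real) \<Rightarrow> real" where
  "slack_prod k \<rho> x = (\<Prod>i<k. 1 - (\<Sum>j<k. x (i, j) powr (1 / \<rho>\<^sup>2))) *
        (\<Prod>j<k. 1 - (\<Sum>i<k. x (i, j) powr (1 / \<rho>\<^sup>2)))"

lemma slack_prod_measurable: "slack_prod k \<rho> \<in> borel_measurable (mat_space k)"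
  unfolding slack_prod_def
  by (intro borel_measurable_times borel_measurable_prod borel_measurable_diff borel_measurable_const
      borel_measurable_sum powr_real_measurable measurable_mat_space_entry)

lemma gamma_kr_eq_set_integral:
  "gamma_kr k \<rho> = inverse (Gamma (1 + \<rho>\<^sup>2) ^ (k\<^sup>2)) * (LINT x : P_set k \<rho> | mat_space k. slack_prod k \<rho> x)"
  unfolding gamma_kr_def slack_prod_def ..

lemma slack_prod_nonneg:
  assumes "x \<in> P_set k \<rho>"
  shows "0 \<le> slack_prod k \<rho> x"
  using assms unfolding P_set_def slack_prod_def
  by (intro mult_nonneg_nonneg prod_nonneg) auto

lemma slack_prod_le_exp:
  assumes x: "x \<in> P_set k \<rho>" and l: "l > 0"
  shows "slack_prod k \<rho> x \<le>
    (exp (l - 1) / l) ^ k * (\<Prod>p\<in>{..<k} \<times> {..<k}. exp (- l * x p powr (1 / \<rho>\<^sup>2)))"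
proof -
  define row where "row i = (\<Sum>j<k. x (i, j) powr (1 / \<rho>\<^sup>2))" for i
  define col where "col j = (\<Sum>i<k. x (i, j) powr (1 / \<rho>\<^sup>2))" for j
  have row: "0 \<le> row i" "row i \<le> 1" if "i < k" for i
    using x that unfolding P_set_def row_def by (auto intro: sum_nonneg)
  have col: "0 \<le> col j" "col j \<le> 1" if "j < k" for j
    using x that unfolding P_set_def col_def by (auto intro: sum_nonneg)
  have "slack_prod k \<rho> x = (\<Prod>i<k. 1 - row i) * (\<Prod>j<k. 1 - col j)"
    unfolding slack_prod_def row_def col_def ..
  also have "\<dots> \<le> (\<Prod>i<k. 1 - row i)"
    using row col by (intro mult_left_le prod_le_1 prod_nonneg) auto
  also have "\<dots> \<le> (\<Prod>i<k. exp (l - 1) / l * exp (- l * row i))"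
    using row one_minus_le_exp_mult[OF l] by (intro prod_mono) auto
  also have "\<dots> = (exp (l - 1) / l) ^ k * (\<Prod>i<k. exp (- l * row i))"
    by (subst prod.distrib) simp
  also have "\<dots> = (exp (l - 1) / l) ^ k * (\<Prod>p\<in>{..<k} \<times> {..<k}. exp (- l * x p powr (1 / \<rho>\<^sup>2)))"
    unfolding row_def sum_distrib_left exp_sum[OF finite_lessThan]
    by (simp add: prod.cartesian_product case_prod_beta)
  finally show ?thesis .
qed

lemma sum_powr_le_half:
  assumes \<rho>: "\<rho> > 0" and y: "\<And>j. j < k \<Longrightarrow> y j \<in> {0..(2 * real k) powr (- \<rho>\<^sup>2)}"
  shows "(\<Sum>j<k. y j powr (1 / \<rho>\<^sup>2)) \<le> 1 / 2"
proof -
  have "y j powr (1 / \<rho>\<^sup>2) \<le> ((2 * real k) powr (- \<rho>\<^sup>2)) powr (1 / \<rho>\<^sup>2)" if "j < k" for j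
    using y[OF that] \<rho> by (intro powr_mono2) auto
  also have "((2 * real k) powr (- \<rho>\<^sup>2)) powr (1 / \<rho>\<^sup>2) = 1 / (2 * real k)"
    using \<rho> by (subst powr_powr) (simp add: powr_minus_divide)
  finally have "(\<Sum>j<k. y j powr (1 / \<rho>\<^sup>2)) \<le> (\<Sum>j<k. 1 / (2 * real k))"
    by (intro sum_mono) auto
  also have "\<dots> \<le> 1 / 2"
    by simp
  finally show ?thesis .
qed

lemma slack_prod_ge_on_box:
  assumes \<rho>: "\<rho> > 0" and x: "x \<in> ({..<k} \<times> {..<k}) \<rightarrow>\<^sub>E {0..(2 * real k) powr (- \<rho>\<^sup>2)}"
  shows "x \<in> P_set k \<rho>" and "(1 / 4) ^ k \<le> slack_prod k \<rho> x"
proof -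
  have entry: "x (i, j) \<in> {0..(2 * real k) powr (- \<rho>\<^sup>2)}" if "i < k" "j < k" for i j
    using PiE_mem[OF x, of "(i, j)"] that by simp
  have row: "(\<Sum>j<k. x (i, j) powr (1 / \<rho>\<^sup>2)) \<le> 1 / 2" if "i < k" for i
    using entry that by (intro sum_powr_le_half[OF \<rho>])
  have col: "(\<Sum>i<k. x (i, j) powr (1 / \<rho>\<^sup>2)) \<le> 1 / 2" if "j < k" for j
    using entry that by (intro sum_powr_le_half[OF \<rho>])
  have "x \<in> ({..<k} \<times> {..<k}) \<rightarrow>\<^sub>E UNIV"
    using x PiE_mono[of "{..<k} \<times> {..<k}" _ "\<lambda>_. UNIV"] by blast
  then show "x \<in> P_set k \<rho>"
    unfolding P_set_def using entry row col by fastforce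
  have row_slack: "(1 / 2) ^ k \<le> (\<Prod>i<k. 1 - (\<Sum>j<k. x (i, j) powr (1 / \<rho>\<^sup>2)))"
    using prod_mono[of "{..<k}" "\<lambda>_. 1 / 2 :: real"] row by fastforce
  have col_slack: "(1 / 2) ^ k \<le> (\<Prod>j<k. 1 - (\<Sum>i<k. x (i, j) powr (1 / \<rho>\<^sup>2)))"
    using prod_mono[of "{..<k}" "\<lambda>_. 1 / 2 :: real"] col by fastforce
  have half_nonneg: "0 \<le> (1 / 2 :: real) ^ k"
    by simp
  have "(1 / 4 :: real) ^ k = (1 / 2) ^ k * (1 / 2) ^ k"
    unfolding power_mult_distrib[symmetric] by simp
  also have "\<dots> \<le> slack_prod k \<rho> x"
    unfolding slack_prod_def
    using mult_mono[OF row_slack col_slack order_trans[OF half_nonneg row_slack] half_nonneg] .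
  finally show "(1 / 4) ^ k \<le> slack_prod k \<rho> x" .
qed

lemma product_sigma_finite_lborel: "product_sigma_finite (\<lambda>_. lborel)"
  unfolding product_sigma_finite_def by (simp add: lborel.sigma_finite_measure_axioms)

lemma card_square_index: "card ({..<k} \<times> {..<k}) = k\<^sup>2"
  by (simp add: power2_eq_square)

lemma nn_integral_slack_prod_le:
  assumes \<rho>: "\<rho> > 0" and l: "l > 0"
  shows "(\<integral>\<^sup>+x. ennreal (indicator (P_set k \<rho>) x * slack_prod k \<rho> x) \<partial>mat_space k)
     \<le> ennreal ((exp (l - 1) / l) ^ k * (l powr (- \<rho>\<^sup>2) * Gamma (1 + \<rho>\<^sup>2)) ^ (k\<^sup>2))"
proof -
  interpret product_sigma_finite "\<lambda>_::nat \<times> nat. lborel"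
    by (rule product_sigma_finite_lborel)
  define I where "I = {..<k} \<times> {..<k}"
  define C where "C = (exp (l - 1) / l) ^ k"
  define f where "f y = exp (- l * y powr (1 / \<rho>\<^sup>2))" for y :: real
  define h where "h y = ennreal (f y) * indicator {0..} y" for y :: real
  have C: "C \<ge> 0"
    unfolding C_def using l by simp
  have Gamma_factor: "0 \<le> l powr (- \<rho>\<^sup>2) * Gamma (1 + \<rho>\<^sup>2)"
    using Gamma_real_pos[of "1 + \<rho>\<^sup>2"] by (simp add: add_pos_nonneg less_imp_le)
  have h_measurable: "h \<in> borel_measurable lborel"
    unfolding h_def f_def by measurable
  have h_integral: "integral\<^sup>N lborel h = ennreal (l powr (- \<rho>\<^sup>2) * Gamma (1 + \<rho>\<^sup>2))"
    unfolding h_def f_def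
    using has_integral_exp_neg_mult_root[OF l, of "\<rho>\<^sup>2"] \<rho>
    by (intro nn_integral_has_integral_lebesgue') auto
  have "ennreal (indicator (P_set k \<rho>) x * slack_prod k \<rho> x) \<le> ennreal C * (\<Prod>p\<in>I. h (x p))" for x
  proof (cases "x \<in> P_set k \<rho>")
    case True
    then have "\<And>p. p \<in> I \<Longrightarrow> x p \<ge> 0"
      unfolding P_set_def I_def by auto
    then have "ennreal C * (\<Prod>p\<in>I. h (x p)) = ennreal (C * (\<Prod>p\<in>I. f (x p)))"
      unfolding h_def using C by (simp add: prod_ennreal f_def ennreal_mult prod_nonneg)
    moreover have "slack_prod k \<rho> x \<le> C * (\<Prod>p\<in>I. f (x p))"
      unfolding C_def I_def f_def using slack_prod_le_exp[OF True l] .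
    ultimately show ?thesis
      using True by (simp add: ennreal_leI)
  qed simp
  then have "(\<integral>\<^sup>+x. ennreal (indicator (P_set k \<rho>) x * slack_prod k \<rho> x) \<partial>mat_space k)
      \<le> (\<integral>\<^sup>+x. ennreal C * (\<Prod>p\<in>I. h (x p)) \<partial>mat_space k)"
    by (intro nn_integral_mono)
  also have "\<dots> = ennreal C * (\<Prod>p\<in>I. integral\<^sup>N lborel h)"
    unfolding mat_space_def I_def using h_measurable
    by (subst nn_integral_cmult, simp, subst product_nn_integral_prod) auto
  also have "\<dots> = ennreal (C * (l powr (- \<rho>\<^sup>2) * Gamma (1 + \<rho>\<^sup>2)) ^ (k\<^sup>2))"
    unfolding h_integral I_def card_square_index prod_constant
    by (simp only: ennreal_power[OF Gamma_factor] ennreal_mult[OF C zero_le_power[OF Gamma_factor]])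
  finally show ?thesis
    unfolding C_def .
qed

lemma nn_integral_slack_prod_ge:
  assumes \<rho>: "\<rho> > 0"
  shows "ennreal ((1 / 4) ^ k * ((2 * real k) powr (- \<rho>\<^sup>2)) ^ (k\<^sup>2))
     \<le> (\<integral>\<^sup>+x. ennreal (indicator (P_set k \<rho>) x * slack_prod k \<rho> x) \<partial>mat_space k)"
proof -
  interpret product_sigma_finite "\<lambda>_::nat \<times> nat. lborel"
    by (rule product_sigma_finite_lborel)
  define c where "c = (2 * real k) powr (- \<rho>\<^sup>2)"
  define B where "B = ({..<k} \<times> {..<k}) \<rightarrow>\<^sub>E {0..c}"
  have B: "B \<in> sets (mat_space k)"
    unfolding B_def mat_space_def by (rule sets_PiM_I_finite) auto
  have "emeasure (mat_space k) B = ennreal c ^ (k\<^sup>2)"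
    unfolding B_def mat_space_def
    by (subst emeasure_PiM) (auto simp: c_def card_square_index)
  then have "ennreal ((1 / 4) ^ k * c ^ (k\<^sup>2)) = (\<integral>\<^sup>+x. ennreal ((1 / 4) ^ k) * indicator B x \<partial>mat_space k)"
    using B by (simp add: c_def nn_integral_cmult_indicator ennreal_mult ennreal_power)
  also have "\<dots> \<le> (\<integral>\<^sup>+x. ennreal (indicator (P_set k \<rho>) x * slack_prod k \<rho> x) \<partial>mat_space k)"
    using slack_prod_ge_on_box[OF \<rho>]
    by (intro nn_integral_mono) (auto simp: B_def c_def indicator_def ennreal_leI)
  finally show ?thesis
    unfolding c_def .
qed

lemma set_integral_slack_prod_bounds:
  assumes \<rho>: "\<rho> > 0" and l: "l > 0"
  shows "(1 / 4) ^ k * ((2 * real k) powr (- \<rho>\<^sup>2)) ^ (k\<^sup>2)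
           \<le> (LINT x : P_set k \<rho> | mat_space k. slack_prod k \<rho> x)"
    and "(LINT x : P_set k \<rho> | mat_space k. slack_prod k \<rho> x)
           \<le> (exp (l - 1) / l) ^ k * (l powr (- \<rho>\<^sup>2) * Gamma (1 + \<rho>\<^sup>2)) ^ (k\<^sup>2)"
proof -
  define N where "N = (\<integral>\<^sup>+x. ennreal (indicator (P_set k \<rho>) x * slack_prod k \<rho> x) \<partial>mat_space k)"
  have "0 \<le> indicator (P_set k \<rho>) x * slack_prod k \<rho> x" for x
    by (simp add: indicator_def slack_prod_nonneg)
  then have "(LINT x : P_set k \<rho> | mat_space k. slack_prod k \<rho> x) = enn2real N"
    unfolding set_lebesgue_integral_def N_def
    by (simp, intro integral_eq_nn_integral)
      (auto intro!: borel_measurable_times borel_measurable_indicator P_set_sets slack_prod_measurable)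
  moreover have upper: "N \<le> ennreal ((exp (l - 1) / l) ^ k * (l powr (- \<rho>\<^sup>2) * Gamma (1 + \<rho>\<^sup>2)) ^ (k\<^sup>2))"
    unfolding N_def by (rule nn_integral_slack_prod_le[OF \<rho> l])
  moreover have lower: "ennreal ((1 / 4) ^ k * ((2 * real k) powr (- \<rho>\<^sup>2)) ^ (k\<^sup>2)) \<le> N"
    unfolding N_def by (rule nn_integral_slack_prod_ge[OF \<rho>])
  moreover have "0 \<le> (exp (l - 1) / l) ^ k * (l powr (- \<rho>\<^sup>2) * Gamma (1 + \<rho>\<^sup>2)) ^ (k\<^sup>2)"
    using l Gamma_real_pos[of "1 + \<rho>\<^sup>2"] by (simp add: add_pos_nonneg less_imp_le)
  moreover have "N < top"
    using upper by (simp add: le_less_trans)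
  ultimately show "(1 / 4) ^ k * ((2 * real k) powr (- \<rho>\<^sup>2)) ^ (k\<^sup>2)
           \<le> (LINT x : P_set k \<rho> | mat_space k. slack_prod k \<rho> x)"
    and "(LINT x : P_set k \<rho> | mat_space k. slack_prod k \<rho> x)
           \<le> (exp (l - 1) / l) ^ k * (l powr (- \<rho>\<^sup>2) * Gamma (1 + \<rho>\<^sup>2)) ^ (k\<^sup>2)"
    using enn2real_mono[OF lower] enn2real_mono[OF upper] by auto
qed

lemma box_bound_eq_powr:
  assumes k: "k \<ge> 1"
  shows "(1 / 4) ^ k * ((2 * real k) powr (- \<rho>\<^sup>2)) ^ (k\<^sup>2)
    = 2 powr (- (2 * real k + (real k)\<^sup>2 * \<rho>\<^sup>2)) * real k powr (- ((real k)\<^sup>2 * \<rho>\<^sup>2))"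
proof -
  have "(2::real) powr (2 * real k) = 4 ^ k"
    using powr_realpow[of 2 "2 * k"] by (simp add: power_mult)
  then have "(1 / 4 :: real) ^ k = 2 powr (- (2 * real k))"
    by (simp add: powr_minus power_one_over inverse_eq_divide)
  moreover have "((2 * real k) powr (- \<rho>\<^sup>2)) ^ (k\<^sup>2) = 2 powr (- ((real k)\<^sup>2 * \<rho>\<^sup>2)) * real k powr (- ((real k)\<^sup>2 * \<rho>\<^sup>2))"
    using k by (simp add: powr_mult power_mult_distrib powr_power)
  ultimately show ?thesis
    by (simp add: powr_add[symmetric] mult.assoc)
qed

lemma gamma_kr_lower_bound:
  assumes \<rho>: "\<rho> > 0" and k: "k \<ge> 1"
  shows "inverse (Gamma (1 + \<rho>\<^sup>2) ^ (k\<^sup>2)) * 2 powr (- (2 * real k + (real k)\<^sup>2 * \<rho>\<^sup>2))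
           * real k powr (- ((real k)\<^sup>2 * \<rho>\<^sup>2)) \<le> gamma_kr k \<rho>"
  unfolding gamma_kr_eq_set_integral mult.assoc box_bound_eq_powr[OF k, symmetric]
  using set_integral_slack_prod_bounds(1)[OF \<rho> zero_less_one] Gamma_real_pos[of "1 + \<rho>\<^sup>2"]
  by (intro mult_left_mono) (auto simp: add_pos_nonneg)

lemma gamma_kr_upper_bound:
  assumes \<rho>: "\<rho> > 0"
  shows "gamma_kr k \<rho> \<le> inverse (Gamma (1 + real k * \<rho>\<^sup>2) ^ k)"
proof -
  define t where "t = real k * \<rho>\<^sup>2"
  define G where "G = Gamma (1 + \<rho>\<^sup>2)"
  have t: "t \<ge> 0"
    unfolding t_def by simp
  have G: "G > 0"
    unfolding G_def by (simp add: add_pos_nonneg)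
  have "gamma_kr k \<rho> \<le> inverse (G ^ (k\<^sup>2)) * ((exp t / (1 + t)) ^ k * ((1 + t) powr (- \<rho>\<^sup>2) * G) ^ (k\<^sup>2))"
    unfolding gamma_kr_eq_set_integral G_def
    using set_integral_slack_prod_bounds(2)[OF \<rho>, of "1 + t" k] t G_def G
    by (intro mult_left_mono) auto
  also have "\<dots> = (exp t / (1 + t) * (1 + t) powr (- t)) ^ k"
  proof -
    have "((1 + t) powr (- \<rho>\<^sup>2)) ^ (k\<^sup>2) = ((1 + t) powr (- t)) ^ k"
      using t by (simp add: powr_power t_def power2_eq_square mult_ac)
    then show ?thesis
      using G by (simp add: power_mult_distrib field_simps)
  qed
  also have "exp t / (1 + t) * (1 + t) powr (- t) = exp t / (1 + t) powr (1 + t)"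
    using t by (simp add: powr_add powr_minus divide_inverse)
  also have "(exp t / (1 + t) powr (1 + t)) ^ k \<le> inverse (Gamma (1 + t)) ^ k"
  proof (rule power_mono)
    have "Gamma (1 + t) \<le> (1 + t) powr (1 + t) / exp t"
      using Gamma_1_plus_le[OF t] by (simp add: add.commute exp_minus divide_inverse)
    then show "exp t / (1 + t) powr (1 + t) \<le> inverse (Gamma (1 + t))"
      using t Gamma_real_pos[of "1 + t"] by (simp add: field_simps)
  qed simp
  finally show ?thesis
    by (simp add: power_inverse t_def)
qed

lemma gamma_kr_pos:
  assumes "\<rho> > 0" and "k \<ge> 1"
  shows "gamma_kr k \<rho> > 0"
proof -
  have "0 < inverse (Gamma (1 + \<rho>\<^sup>2) ^ (k\<^sup>2)) * 2 powr (- (2 * real k + (real k)\<^sup>2 * \<rho>\<^sup>2))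
           * real k powr (- ((real k)\<^sup>2 * \<rho>\<^sup>2))"
    using assms by (simp add: add_pos_nonneg)
  then show ?thesis
    using gamma_kr_lower_bound[OF assms] by linarith
qed

lemma ln_gamma_kr_ge:
  assumes \<rho>: "\<rho> > 0" and k: "k \<ge> 1"
  shows "- ((\<rho> ^ 4 + \<rho>\<^sup>2 + 2) * (real k)\<^sup>2) \<le> ln (gamma_kr k \<rho>) + (real k)\<^sup>2 * \<rho>\<^sup>2 * ln (real k)"
proof -
  define s where "s = \<rho>\<^sup>2"
  define G where "G = Gamma (1 + s)"
  have s: "s > 0"
    unfolding s_def using \<rho> by simp
  have G: "G > 0"
    unfolding G_def using s by simp
  have "ln (inverse (G ^ (k\<^sup>2)) * 2 powr (- (2 * real k + (real k)\<^sup>2 * s)) * real k powr (- ((real k)\<^sup>2 * s)))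
      \<le> ln (gamma_kr k \<rho>)"
    using gamma_kr_lower_bound[OF \<rho> k] gamma_kr_pos[OF \<rho> k] G k unfolding G_def s_def
    by (subst ln_le_cancel_iff) auto
  then have "- ((real k)\<^sup>2 * ln G) - (2 * real k + (real k)\<^sup>2 * s) * ln 2 - (real k)\<^sup>2 * s * ln (real k)
      \<le> ln (gamma_kr k \<rho>)"
    using G k by (simp add: ln_mult ln_inverse ln_realpow algebra_simps)
  moreover have "(real k)\<^sup>2 * ln G \<le> (real k)\<^sup>2 * s\<^sup>2"
    unfolding G_def using ln_Gamma_1_plus_le_square[of s] s by (intro mult_left_mono) auto
  moreover have "(2 * real k + (real k)\<^sup>2 * s) * ln 2 \<le> 2 * (real k)\<^sup>2 + (real k)\<^sup>2 * s"
    using ln_le_minus_one[of 2] ln_ge_zero[of 2] k s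
    by (intro order_trans[OF mult_left_mono[of "ln 2" 1]]) (auto simp: power2_eq_square)
  ultimately show ?thesis
    unfolding s_def by (simp add: algebra_simps power2_eq_square power4_eq_xxxx)
qed

lemma ln_gamma_kr_le:
  assumes \<rho>: "\<rho> > 0" and k: "k \<ge> 1"
  shows "ln (gamma_kr k \<rho>) + (real k)\<^sup>2 * \<rho>\<^sup>2 * ln (real k) \<le> (real k)\<^sup>2"
proof -
  define s where "s = \<rho>\<^sup>2"
  define t where "t = real k * s"
  have s: "s > 0" and t: "t > 0"
    unfolding s_def t_def using \<rho> k by auto
  have "ln (gamma_kr k \<rho>) \<le> ln (inverse (Gamma (1 + t) ^ k))"
    using gamma_kr_upper_bound[OF \<rho>] gamma_kr_pos[OF \<rho> k] t unfolding t_def s_def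
    by (subst ln_le_cancel_iff) auto
  also have "\<dots> = - (real k * ln (Gamma (1 + t)))"
    using t by (simp add: ln_inverse ln_realpow)
  also have "\<dots> \<le> - (real k * (t * ln t - t))"
    using ln_Gamma_1_plus_ge[OF t] k by simp
  also have "\<dots> = (real k)\<^sup>2 * (s * (1 - ln s)) - (real k)\<^sup>2 * s * ln (real k)"
    using s k by (simp add: t_def ln_mult power2_eq_square algebra_simps)
  also have "\<dots> \<le> (real k)\<^sup>2 - (real k)\<^sup>2 * s * ln (real k)"
    using mult_left_mono[OF mult_one_minus_ln_le_one[OF s], of "(real k)\<^sup>2"] by simp
  finally show ?thesis
    unfolding s_def by simp
qed

theorem lemma10:
  shows "(\<forall>(k::nat) (\<rho>::real). \<rho> > 0 \<longrightarrow> k \<ge> 1 \<longrightarrow>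
            inverse (Gamma (1 + \<rho>\<^sup>2) ^ (k\<^sup>2)) * 2 powr (- (2 * real k + (real k)\<^sup>2 * \<rho>\<^sup>2))
              * real k powr (- ((real k)\<^sup>2 * \<rho>\<^sup>2)) \<le> gamma_kr k \<rho>
          \<and> gamma_kr k \<rho> \<le> inverse (Gamma (1 + real k * \<rho>\<^sup>2) ^ k))
       \<and> (\<forall>R>0. \<exists>C. \<forall>(k::nat) (\<rho>::real). k \<ge> 1 \<longrightarrow> 0 < \<rho> \<longrightarrow> \<rho> \<le> R \<longrightarrow>
            \<bar>ln (gamma_kr k \<rho>) + (real k)\<^sup>2 * \<rho>\<^sup>2 * ln (real k)\<bar> \<le> C * (real k)\<^sup>2)"
proof (intro conjI allI impI exI)
  fix k :: nat and \<rho> :: real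
  assume \<rho>: "\<rho> > 0" and k: "k \<ge> 1"
  show "inverse (Gamma (1 + \<rho>\<^sup>2) ^ (k\<^sup>2)) * 2 powr (- (2 * real k + (real k)\<^sup>2 * \<rho>\<^sup>2))
              * real k powr (- ((real k)\<^sup>2 * \<rho>\<^sup>2)) \<le> gamma_kr k \<rho>"
    and "gamma_kr k \<rho> \<le> inverse (Gamma (1 + real k * \<rho>\<^sup>2) ^ k)"
    using gamma_kr_lower_bound[OF \<rho> k] gamma_kr_upper_bound[OF \<rho>] .
next
  fix R :: real and k :: nat and \<rho> :: real
  assume k: "k \<ge> 1" and \<rho>: "0 < \<rho>" "\<rho> \<le> R"
  have "(\<rho> ^ 4 + \<rho>\<^sup>2 + 2) * (real k)\<^sup>2 \<le> (R ^ 4 + R\<^sup>2 + 3) * (real k)\<^sup>2"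
    using \<rho> by (intro mult_right_mono add_mono power_mono) auto
  moreover have "(real k)\<^sup>2 \<le> (R ^ 4 + R\<^sup>2 + 3) * (real k)\<^sup>2"
    using mult_right_mono[of 1 "R ^ 4 + R\<^sup>2 + 3" "(real k)\<^sup>2"] by (simp add: zero_le_even_power)
  ultimately show "\<bar>ln (gamma_kr k \<rho>) + (real k)\<^sup>2 * \<rho>\<^sup>2 * ln (real k)\<bar> \<le> (R ^ 4 + R\<^sup>2 + 3) * (real k)\<^sup>2"
    using ln_gamma_kr_ge[OF \<rho>(1) k] ln_gamma_kr_le[OF \<rho>(1) k] by linarith
qed

end
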